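(* Let $n\ge 2$. For $a\in\mathbb{R}^{n-1}$ and $\rho>0$ let $$B(a,\rho)=\begin{pmatrix} I & -a\\ -a^T & a^Ta-\rho^2\end{pmatrix}\in\mathbb{S}^n,$$ where $I$ is the $(n-1)\times(n-1)$ identity. Let $G\subseteq\mathbb{Z}^{n-1}\times(0,1/2]$ be such that $a_1\neq a_2$ for every pair of distinct $(a_1,\rho_1),(a_2,\rho_2)\in G$. Then $B(a_1,\rho_1)+B(a_2,\rho_2)\in\mathbb{S}^n_+$ for every distinct $(a_1,\rho_1),(a_2,\rho_2)\in G$; in particular $\mathcal{B}(G)=\{B(a,\rho):(a,\rho)\in G\}$ satisfies Condition (D).
   Context: $\mathbb{S}^n$ denotes the space of real $n\times n$ symmetric matrices and $\mathbb{S}^n_+$ its cone of positive semidefinite matrices. A set $\mathcal{B}\subseteq\mathbb{S}^n$ satisfies Condition (D) if there exist $\alpha_B>0$ $(B\in\mathcal{B})$ with $\alpha_AA+\alpha_BB\in\mathbb{S}^n_+$ for every distinct pair $A,B\in\mathcal{B}$. *)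

theory Defs
  imports "HOL-Analysis.Analysis"
begin

text \<open>Symmetric n x n real matrices are represented with the finite index type
  'm option, where Some k (k :: 'm) index the first n-1 coordinates and None
  indexes the last coordinate; thus n = CARD('m) + 1 >= 2.\<close>

definition psd :: "real^'k^'k \<Rightarrow> bool" where
  "psd M \<longleftrightarrow> transpose M = M \<and> (\<forall>x. 0 \<le> x \<bullet> (M *v x))"

definition condD :: "(real^'k^'k) set \<Rightarrow> bool" where
  "condD \<B> \<longleftrightarrow> (\<exists>\<alpha>. (\<forall>B\<in>\<B>. \<alpha> B > 0) \<and>
      (\<forall>A\<in>\<B>. \<forall>B\<in>\<B>. A \<noteq> B \<longrightarrow> psd (\<alpha> A *\<^sub>R A + \<alpha> B *\<^sub>R B)))"

definition Bmat :: "real^'m \<Rightarrow> real \<Rightarrow> real^('m::finite option)^('m option)" where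
  "Bmat a \<rho> = (\<chi> i j. case (i, j) of
       (Some k, Some l) \<Rightarrow> (if k = l then 1 else 0)
     | (Some k, None) \<Rightarrow> - (a $ k)
     | (None, Some l) \<Rightarrow> - (a $ l)
     | (None, None) \<Rightarrow> a \<bullet> a - \<rho>\<^sup>2)"

end

theory Submission
  imports Defs
begin

(* Writing x = (y, t) with t the last coordinate, the quadratic form of B(a,\<rho>) is
   |y - t a|^2 - t^2 \<rho>^2.  For the sum of two such forms the parallelogram law gives
   |y - t a|^2 + |y - t b|^2 \<ge> t^2 |a - b|^2 / 2, so B(a,\<rho>) + B(b,\<sigma>) is positive
   semidefinite as soon as \<rho>^2 + \<sigma>^2 \<le> |a - b|^2 / 2.  Distinct integer points are at
   distance at least 1 and radii in (0, 1/2] give \<rho>^2 + \<sigma>^2 \<le> 1/2; Condition (D)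
   then holds with all weights equal to 1. *)

lemma sum_UNIV_option:
  fixes f :: "'a::finite option \<Rightarrow> 'b::comm_monoid_add"
  shows "(\<Sum>i\<in>UNIV. f i) = f None + (\<Sum>k\<in>UNIV. f (Some k))"
proof -
  have "(\<Sum>i\<in>UNIV. f i) = f None + (\<Sum>i\<in>range Some. f i)"
    by (simp add: UNIV_option_conv)
  also have "(\<Sum>i\<in>range Some. f i) = (\<Sum>k\<in>UNIV. f (Some k))"
    by (simp add: sum.reindex)
  finally show ?thesis .
qed

lemma transpose_add: "transpose (A + B) = transpose A + transpose (B :: 'a::plus^'n^'m)"
  by (simp add: transpose_def vec_eq_iff)

lemma transpose_Bmat: "transpose (Bmat a \<rho>) = Bmat a \<rho>"
  by (simp add: transpose_def vec_eq_iff Bmat_def split: option.split)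

lemma inner_Bmat_mult:
  fixes x :: "real^('m::finite option)"
  defines "y \<equiv> (\<chi> k. x $ Some k)" and "t \<equiv> x $ None"
  shows "x \<bullet> (Bmat a \<rho> *v x) = (norm (y - t *\<^sub>R a))\<^sup>2 - (t * \<rho>)\<^sup>2"
proof -
  have row_Some: "(Bmat a \<rho> *v x) $ Some k = y $ k - t * a $ k" for k
    by (simp add: matrix_vector_mult_def sum_UNIV_option Bmat_def y_def t_def
        if_distrib [of "\<lambda>c. c * _"] cong: if_cong)
  have row_None: "(Bmat a \<rho> *v x) $ None = (a \<bullet> a - \<rho>\<^sup>2) * t - a \<bullet> y"
    by (simp add: matrix_vector_mult_def sum_UNIV_option Bmat_def y_def t_def
        inner_vec_def sum_negf)
  have "x \<bullet> (Bmat a \<rho> *v x)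
      = t * ((a \<bullet> a - \<rho>\<^sup>2) * t - a \<bullet> y) + (\<Sum>k\<in>UNIV. y $ k * (y $ k - t * a $ k))"
    by (simp only: inner_vec_def sum_UNIV_option row_Some row_None) (simp add: y_def t_def)
  also have "(\<Sum>k\<in>UNIV. y $ k * (y $ k - t * a $ k)) = y \<bullet> y - t * (a \<bullet> y)"
    by (simp add: inner_vec_def algebra_simps sum_subtractf sum_distrib_left)
  finally show ?thesis
    unfolding power2_norm_eq_inner
    by (simp add: inner_diff_left inner_diff_right inner_commute power2_eq_square algebra_simps)
qed

lemma norm_diff_power2_le:
  fixes u v :: "'a::real_inner"
  shows "(norm (u - v))\<^sup>2 \<le> 2 * ((norm u)\<^sup>2 + (norm v)\<^sup>2)"
proof -
  have "(norm (u - v))\<^sup>2 + (norm (u + v))\<^sup>2 = 2 * ((norm u)\<^sup>2 + (norm v)\<^sup>2)"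
    by (simp add: power2_norm_eq_inner inner_diff_left inner_diff_right inner_add_left
        inner_add_right inner_commute)
  then show ?thesis
    by (metis le_add_same_cancel1 zero_le_power2)
qed

lemma psd_Bmat_add:
  fixes a b :: "real^'m::finite"
  assumes "\<rho>\<^sup>2 + \<sigma>\<^sup>2 \<le> (dist a b)\<^sup>2 / 2"
  shows "psd (Bmat a \<rho> + Bmat b \<sigma>)"
  unfolding psd_def
proof (intro conjI allI)
  show "transpose (Bmat a \<rho> + Bmat b \<sigma>) = Bmat a \<rho> + Bmat b \<sigma>"
    by (simp add: transpose_add transpose_Bmat)
next
  fix x :: "real^('m option)"
  define y where "y = (\<chi> k. x $ Some k)"
  define t where "t = x $ None"
  have "(t * dist a b)\<^sup>2 = (norm ((y - t *\<^sub>R a) - (y - t *\<^sub>R b)))\<^sup>2"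
    by (simp add: dist_norm power_mult_distrib norm_minus_commute flip: scaleR_diff_right)
  also have "\<dots> \<le> 2 * ((norm (y - t *\<^sub>R a))\<^sup>2 + (norm (y - t *\<^sub>R b))\<^sup>2)"
    by (rule norm_diff_power2_le)
  finally have "t\<^sup>2 * (\<rho>\<^sup>2 + \<sigma>\<^sup>2) \<le> (norm (y - t *\<^sub>R a))\<^sup>2 + (norm (y - t *\<^sub>R b))\<^sup>2"
    using mult_left_mono [OF assms, of "t\<^sup>2"] by (simp add: power_mult_distrib)
  then show "0 \<le> x \<bullet> ((Bmat a \<rho> + Bmat b \<sigma>) *v x)"
    by (simp add: matrix_vector_mult_add_rdistrib inner_add_right inner_Bmat_mult
        power_mult_distrib algebra_simps flip: y_def t_def)
qed

lemma one_le_dist_Ints_vec: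
  fixes a b :: "real^'m::finite"
  assumes "\<forall>i. a $ i \<in> \<int>" "\<forall>i. b $ i \<in> \<int>" "a \<noteq> b"
  shows "1 \<le> dist a b"
proof -
  obtain i where "a $ i \<noteq> b $ i"
    using assms(3) by (auto simp: vec_eq_iff)
  with assms(1,2) have "1 \<le> \<bar>(a - b) $ i\<bar>"
    by (intro Ints_nonzero_abs_ge1) auto
  also have "\<dots> \<le> dist a b"
    using component_le_norm_cart [of "a - b" i] by (simp add: dist_norm)
  finally show ?thesis .
qed

lemma psd_Bmat_add_Ints:
  fixes a b :: "real^'m::finite"
  assumes "\<forall>i. a $ i \<in> \<int>" "\<forall>i. b $ i \<in> \<int>" "a \<noteq> b"
    and "\<bar>\<rho>\<bar> \<le> 1/2" "\<bar>\<sigma>\<bar> \<le> 1/2"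
  shows "psd (Bmat a \<rho> + Bmat b \<sigma>)"
proof (rule psd_Bmat_add)
  have "\<rho>\<^sup>2 \<le> (1/2)\<^sup>2" "\<sigma>\<^sup>2 \<le> (1/2)\<^sup>2"
    using assms(4,5) abs_le_square_iff [of _ "1/2 :: real"] by simp_all
  moreover have "1 \<le> (dist a b)\<^sup>2"
    using one_le_dist_Ints_vec [OF assms(1-3)] by (simp add: one_le_power)
  ultimately show "\<rho>\<^sup>2 + \<sigma>\<^sup>2 \<le> (dist a b)\<^sup>2 / 2"
    by (simp add: power_divide)
qed

lemma condD_if_psd_add:
  assumes "\<forall>A\<in>\<B>. \<forall>B\<in>\<B>. A \<noteq> B \<longrightarrow> psd (A + B)"
  shows "condD \<B>"
  unfolding condD_def using assms by (intro exI [of _ "\<lambda>_. 1"]) simp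

theorem mainTheorem3:
  fixes G :: "((real^('m::finite)) \<times> real) set"
  assumes G_sub: "\<forall>(a, \<rho>)\<in>G. (\<forall>i. a $ i \<in> \<int>) \<and> 0 < \<rho> \<and> \<rho> \<le> 1/2"
    and G_dist: "\<forall>p\<in>G. \<forall>q\<in>G. p \<noteq> q \<longrightarrow> fst p \<noteq> fst q"
  shows "(\<forall>p\<in>G. \<forall>q\<in>G. p \<noteq> q \<longrightarrow>
            psd (Bmat (fst p) (snd p) + Bmat (fst q) (snd q)))
         \<and> condD ((\<lambda>(a, \<rho>). Bmat a \<rho>) ` G)"
proof -
  have psd_pairs: "\<forall>p\<in>G. \<forall>q\<in>G. p \<noteq> q \<longrightarrow>
      psd (Bmat (fst p) (snd p) + Bmat (fst q) (snd q))"
  proof (intro ballI impI)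
    fix p q assume "p \<in> G" "q \<in> G" "p \<noteq> q"
    with G_sub G_dist show "psd (Bmat (fst p) (snd p) + Bmat (fst q) (snd q))"
      by (intro psd_Bmat_add_Ints) (auto simp: case_prod_beta)
  qed
  moreover have "condD ((\<lambda>(a, \<rho>). Bmat a \<rho>) ` G)"
  proof (intro condD_if_psd_add ballI impI)
    fix A B assume "A \<in> (\<lambda>(a, \<rho>). Bmat a \<rho>) ` G" "B \<in> (\<lambda>(a, \<rho>). Bmat a \<rho>) ` G" "A \<noteq> B"
    then obtain p q where "p \<in> G" "q \<in> G" "p \<noteq> q"
      and "A = Bmat (fst p) (snd p)" "B = Bmat (fst q) (snd q)"
      by (auto simp: case_prod_beta)
    with psd_pairs show "psd (A + B)" by blast
  qed
  ultimately show ?thesis ..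
qed

end
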